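(* For every formula $A$ of $\mathbf{L_1}$, if $TA$ is valid in first-order predicate logic with equality, then it is not the case that $\dashv_H A$.
   Context: Formulas of $\mathbf{L_1}$: built from atomic formulas $\epsilon ab$ ($a,b$ name variables, possibly equal) with primitive connectives $\vee,\sim$; $\wedge,\supset,\equiv$ defined as usual. Disjunctions may be associated in any way. $\vdash_H A$: $A$ belongs to the smallest set containing all instances of classical propositional tautologies and all formulas $\epsilon ab\supset\epsilon aa$, $(\epsilon ab\wedge\epsilon bc)\supset\epsilon ac$, $(\epsilon ab\wedge\epsilon bb)\supset\epsilon ba$, closed under modus ponens. Positive/negative parts (occurrences): $A$ is a positive part of $A$; if $B\vee C$ is a positive part then $B,C$ are positive parts; if $\sim B$ is a positive part then $B$ is a negative part; if $\sim B$ is a negative part then $B$ is a positive part. $F[B_+,B_-]$ denotes a formula in which some $B$ has one occurrence as positive part and another non-overlapping occurrence as negative part. Hintikka formula: a formula $H$ such that (1) $H$ is not of the form $F[B_+,B_-]$; (2) if $B\vee C$ is a negative part of $H$ then $B$ or $C$ is; (3) if $\epsilon ab$ is a negative part then so is $\epsilon aa$; (4) if $\epsilon ab,\epsilon bc$ are negative parts then so is $\epsilon ac$; (5) if $\epsilon ab,\epsilon bb$ are negative parts then so is $\epsilon ba$. $\mathbf{HAR}$: fix a name variable $a_0$; $\dashv_H$ is the smallest set such that $\dashv_H\epsilon a_0a_0$; $\dashv_H\sim\epsilon a_0a_0$; if $\vdash_H A\supset B$ and $\dashv_H B$ then $\dashv_H A$; if $\dashv_H A$ and $A$ is obtained from $B$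 by uniform substitution of name variables for name variables then $\dashv_H B$; if $A$ is a Hintikka formula that is a disjunction of atomic or negated atomic formulas, $\dashv_H A$, and $\epsilon ab$ is not a negative part of $A$, then $\dashv_H A\vee\epsilon ab$. Translation $T$ into first-order logic with equality, with a monadic predicate $F_a$ for each name variable $a$: $T\epsilon ab=\exists x(F_ax\wedge F_bx)\wedge\forall x\forall y(F_ax\wedge F_ay\supset x=y)$; $T(A\vee B)=TA\vee TB$; $T(\sim A)=\sim TA$. Valid: true in every structure with nonempty domain and $=$ as identity. *)

theory Defs
  imports Main
begin

datatype form = Eps nat nat | Or form form | Neg form

definition And :: "form \<Rightarrow> form \<Rightarrow> form" where
  "And A B = Neg (Or (Neg A) (Neg B))"

definition Imp :: "form \<Rightarrow> form \<Rightarrow> form" where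
  "Imp A B = Or (Neg A) B"

fun nsubst :: "(nat \<Rightarrow> nat) \<Rightarrow> form \<Rightarrow> form" where
  "nsubst s (Eps a b) = Eps (s a) (s b)"
| "nsubst s (Or A B) = Or (nsubst s A) (nsubst s B)"
| "nsubst s (Neg A) = Neg (nsubst s A)"

datatype pform = PVar nat | POr pform pform | PNeg pform

fun peval :: "(nat \<Rightarrow> bool) \<Rightarrow> pform \<Rightarrow> bool" where
  "peval v (PVar n) = v n"
| "peval v (POr P Q) = (peval v P \<or> peval v Q)"
| "peval v (PNeg P) = (\<not> peval v P)"

definition ptaut :: "pform \<Rightarrow> bool" where
  "ptaut P \<longleftrightarrow> (\<forall>v. peval v P)"

fun pinst :: "(nat \<Rightarrow> form) \<Rightarrow> pform \<Rightarrow> form" where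
  "pinst s (PVar n) = s n"
| "pinst s (POr P Q) = Or (pinst s P) (pinst s Q)"
| "pinst s (PNeg P) = Neg (pinst s P)"

definition taut_inst :: "form \<Rightarrow> bool" where
  "taut_inst A \<longleftrightarrow> (\<exists>P s. ptaut P \<and> A = pinst s P)"

inductive hprov :: "form \<Rightarrow> bool" where
  taut: "taut_inst A \<Longrightarrow> hprov A"
| ax1: "hprov (Imp (Eps a b) (Eps a a))"
| ax2: "hprov (Imp (And (Eps a b) (Eps b c)) (Eps a c))"
| ax3: "hprov (Imp (And (Eps a b) (Eps b b)) (Eps b a))"
| mp: "hprov (Imp A B) \<Longrightarrow> hprov A \<Longrightarrow> hprov B"

datatype dir = DL | DR | DN

text \<open>\<open>part H p B pol\<close>: the occurrence of \<open>B\<close> at path \<open>p\<close> in \<open>H\<close> is a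
  positive part (\<open>pol = True\<close>) or a negative part (\<open>pol = False\<close>).\<close>
inductive part :: "form \<Rightarrow> dir list \<Rightarrow> form \<Rightarrow> bool \<Rightarrow> bool" for H where
  root: "part H [] H True"
| orL: "part H p (Or B C) True \<Longrightarrow> part H (p @ [DL]) B True"
| orR: "part H p (Or B C) True \<Longrightarrow> part H (p @ [DR]) C True"
| negP: "part H p (Neg B) True \<Longrightarrow> part H (p @ [DN]) B False"
| negN: "part H p (Neg B) False \<Longrightarrow> part H (p @ [DN]) B True"

definition neg_part :: "form \<Rightarrow> form \<Rightarrow> bool" where
  "neg_part B H \<longleftrightarrow> (\<exists>p. part H p B False)"

definition non_overlapping :: "dir list \<Rightarrow> dir list \<Rightarrow> bool" where
  "non_overlapping p q \<longleftrightarrow> \<not> (\<exists>r. q = p @ r) \<and> \<not> (\<exists>r. p = q @ r)"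

definition has_pos_neg_pair :: "form \<Rightarrow> bool" where
  "has_pos_neg_pair H \<longleftrightarrow>
     (\<exists>B p q. part H p B True \<and> part H q B False \<and> non_overlapping p q)"

definition hintikka :: "form \<Rightarrow> bool" where
  "hintikka H \<longleftrightarrow>
     \<not> has_pos_neg_pair H
   \<and> (\<forall>B C. neg_part (Or B C) H \<longrightarrow> neg_part B H \<or> neg_part C H)
   \<and> (\<forall>a b. neg_part (Eps a b) H \<longrightarrow> neg_part (Eps a a) H)
   \<and> (\<forall>a b c. neg_part (Eps a b) H \<and> neg_part (Eps b c) H \<longrightarrow> neg_part (Eps a c) H)
   \<and> (\<forall>a b. neg_part (Eps a b) H \<and> neg_part (Eps b b) H \<longrightarrow> neg_part (Eps b a) H)"

inductive lit_disj :: "form \<Rightarrow> bool" where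
  atom: "lit_disj (Eps a b)"
| natom: "lit_disj (Neg (Eps a b))"
| disj: "lit_disj A \<Longrightarrow> lit_disj B \<Longrightarrow> lit_disj (Or A B)"

inductive refut :: "nat \<Rightarrow> form \<Rightarrow> bool" for a0 where
  r1: "refut a0 (Eps a0 a0)"
| r2: "refut a0 (Neg (Eps a0 a0))"
| r3: "hprov (Imp A B) \<Longrightarrow> refut a0 B \<Longrightarrow> refut a0 A"
| r4: "refut a0 A \<Longrightarrow> A = nsubst s B \<Longrightarrow> refut a0 B"
| r5: "hintikka A \<Longrightarrow> lit_disj A \<Longrightarrow> refut a0 A \<Longrightarrow> \<not> neg_part (Eps a b) A
       \<Longrightarrow> refut a0 (Or A (Eps a b))"

text \<open>Monadic predicates \<open>F\<^sub>a\<close> indexed by name variables; individual variables are nats.\<close>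
datatype fol = FPred nat nat | FEq nat nat | FNeg fol | FOr fol fol
  | FAnd fol fol | FImp fol fol | FEx nat fol | FAll nat fol

fun feval :: "'d set \<Rightarrow> (nat \<Rightarrow> 'd \<Rightarrow> bool) \<Rightarrow> (nat \<Rightarrow> 'd) \<Rightarrow> fol \<Rightarrow> bool" where
  "feval D I e (FPred a x) = I a (e x)"
| "feval D I e (FEq x y) = (e x = e y)"
| "feval D I e (FNeg \<phi>) = (\<not> feval D I e \<phi>)"
| "feval D I e (FOr \<phi> \<psi>) = (feval D I e \<phi> \<or> feval D I e \<psi>)"
| "feval D I e (FAnd \<phi> \<psi>) = (feval D I e \<phi> \<and> feval D I e \<psi>)"
| "feval D I e (FImp \<phi> \<psi>) = (feval D I e \<phi> \<longrightarrow> feval D I e \<psi>)"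
| "feval D I e (FEx x \<phi>) = (\<exists>d\<in>D. feval D I (e(x := d)) \<phi>)"
| "feval D I e (FAll x \<phi>) = (\<forall>d\<in>D. feval D I (e(x := d)) \<phi>)"

text \<open>Validity: truth in every structure with nonempty domain, \<open>=\<close> interpreted as identity.
  Domains are taken to be nonempty sets of natural numbers (sufficient by
  Loewenheim-Skolem).\<close>
definition fol_valid :: "fol \<Rightarrow> bool" where
  "fol_valid \<phi> \<longleftrightarrow>
     (\<forall>(D::nat set) I e. D \<noteq> {} \<longrightarrow> (\<forall>x. e x \<in> D) \<longrightarrow> feval D I e \<phi>)"

fun T :: "form \<Rightarrow> fol" where
  "T (Eps a b) =
     FAnd (FEx 0 (FAnd (FPred a 0) (FPred b 0)))
          (FAll 0 (FAll 1 (FImp (FAnd (FPred a 0) (FPred a 1)) (FEq 0 1))))"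
| "T (Or A B) = FOr (T A) (T B)"
| "T (Neg A) = FNeg (T A)"

end

theory Submission
  imports Defs
begin

text \<open>The two axioms have obvious
  countermodels, \<open>\<turnstile>\<^sub>H\<close> is sound under \<open>T\<close> so the implication rule transports invalidity
  backwards, and renaming name variables amounts to renaming the predicates \<open>F\<^sub>a\<close>. For the last
  rule, the Hintikka closure conditions on the negative atoms \<open>\<epsilon>ab\<close> of \<open>A\<close> are exactly what is
  needed to build a structure in which \<open>T(\<epsilon>cd)\<close> holds iff \<open>\<epsilon>cd\<close> is a negative part of \<open>A\<close>: the
  names \<open>c\<close> with \<open>\<epsilon>cc\<close> negative denote singletons, one per class of the induced equivalence,
  and all others denote sets with at least two elements. In it the literal disjunction \<open>A\<close> and
  the new atom \<open>\<epsilon>ab\<close> are both false.\<close>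

lemma feval_T_pinst: "feval D I e (T (pinst s P)) = peval (\<lambda>n. feval D I e (T (s n))) P"
  by (induction P) auto

lemma feval_T_nsubst: "feval D I e (T (nsubst s A)) = feval D (\<lambda>a. I (s a)) e (T A)"
  by (induction A) auto

lemma fol_valid_T_Imp: "fol_valid (T (Imp A B)) \<Longrightarrow> fol_valid (T A) \<Longrightarrow> fol_valid (T B)"
  unfolding fol_valid_def Imp_def by simp

lemma hprov_fol_valid: "hprov A \<Longrightarrow> fol_valid (T A)"
proof (induction rule: hprov.induct)
  case (taut A)
  then obtain P s where "ptaut P" "A = pinst s P"
    unfolding taut_inst_def by blast
  then show ?case
    unfolding fol_valid_def ptaut_def by (simp add: feval_T_pinst)
next
  case (mp A B)
  then show ?case using fol_valid_T_Imp by blast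
qed (simp_all add: fol_valid_def Imp_def And_def; metis)+

fun poslits :: "form \<Rightarrow> (nat \<times> nat) set" where
  "poslits (Eps a b) = {(a, b)}"
| "poslits (Or A B) = poslits A \<union> poslits B"
| "poslits (Neg A) = {}"

fun neglits :: "form \<Rightarrow> (nat \<times> nat) set" where
  "neglits (Eps a b) = {}"
| "neglits (Or A B) = neglits A \<union> neglits B"
| "neglits (Neg (Eps a b)) = {(a, b)}"
| "neglits (Neg A) = {}"

lemma feval_T_lit_disj:
  "lit_disj A \<Longrightarrow> feval D I e (T A) \<longleftrightarrow>
     (\<exists>(c, d) \<in> poslits A. feval D I e (T (Eps c d))) \<or>
     (\<exists>(c, d) \<in> neglits A. \<not> feval D I e (T (Eps c d)))"
  by (induction rule: lit_disj.induct) (auto simp del: T.simps(1))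

lemma lit_disj_complementary_fol_valid:
  assumes "lit_disj A" "(c, d) \<in> poslits A" "(c, d) \<in> neglits A"
  shows "fol_valid (T A)"
  unfolding fol_valid_def
  using feval_T_lit_disj[OF assms(1)] assms(2,3) by blast

lemma part_append: "part H p B pol \<Longrightarrow> part H' q H True \<Longrightarrow> part H' (q @ p) B pol"
  by (induction rule: part.induct) (auto simp flip: append_assoc intro: part.intros)

inductive_cases lit_disj_OrE: "lit_disj (Or B C)"
inductive_cases lit_disj_NegE: "lit_disj (Neg B)"

lemma part_lit_disj:
  "part A p B pol \<Longrightarrow> lit_disj A \<Longrightarrow>
     (pol \<and> lit_disj B \<and> neglits B \<subseteq> neglits A) \<or>
     (\<not> pol \<and> (\<exists>c d. B = Eps c d \<and> (c, d) \<in> neglits A))"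
  by (induction rule: part.induct) (auto elim: lit_disj_OrE lit_disj_NegE)

lemma neg_part_Eps_lit_disj_iff:
  assumes "lit_disj A"
  shows "neg_part (Eps c d) A \<longleftrightarrow> (c, d) \<in> neglits A"
proof
  show "neg_part (Eps c d) A \<Longrightarrow> (c, d) \<in> neglits A"
    unfolding neg_part_def using part_lit_disj assms by blast
  show "(c, d) \<in> neglits A \<Longrightarrow> neg_part (Eps c d) A"
    using assms
  proof (induction rule: lit_disj.induct)
    case (natom a b)
    then have "part (Neg (Eps a b)) [DN] (Eps c d) False"
      using part.negP[OF part.root] by simp
    then show ?case unfolding neg_part_def by blast
  next
    case (disj A B)
    have "part (Or A B) [DL] A True" "part (Or A B) [DR] B True"
      using part.orL[OF part.root] part.orR[OF part.root] by simp_all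
    with disj show ?case
      unfolding neg_part_def by (auto dest: part_append)
  qed simp
qed

locale eps_closed =
  fixes N :: "nat \<Rightarrow> nat \<Rightarrow> bool"
  assumes refl_left: "N c d \<Longrightarrow> N c c"
    and trans: "N c d \<Longrightarrow> N d e \<Longrightarrow> N c e"
    and sym_right: "N c d \<Longrightarrow> N d d \<Longrightarrow> N d c"
begin

definition rep :: "nat \<Rightarrow> nat" where
  "rep c = (LEAST x. N c x \<and> N x c)"

lemma rep_related: "N c c \<Longrightarrow> N c (rep c) \<and> N (rep c) c"
  unfolding rep_def by (rule LeastI[of _ c]) simp

lemma rep_eq_iff:
  assumes "N c c" "N d d"
  shows "rep c = rep d \<longleftrightarrow> N c d"
proof
  assume "rep c = rep d"
  then show "N c d" using rep_related assms trans by metis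
next
  assume "N c d"
  then have "N d c" using sym_right assms(2) by blast
  with \<open>N c d\<close> have "(\<lambda>x. N c x \<and> N x c) = (\<lambda>x. N d x \<and> N x d)"
    using trans by (intro ext) meson
  then show "rep c = rep d" unfolding rep_def by simp
qed

text \<open>Even numbers \<open>2 * rep c\<close> stand for the classes, odd numbers are the extra elements
  that make \<open>F\<^sub>c\<close> a non-singleton when \<open>N c c\<close> fails.\<close>
definition model :: "nat \<Rightarrow> nat \<Rightarrow> bool" where
  "model c x \<longleftrightarrow>
     (if N c c then x = 2 * rep c else odd x \<or> (\<exists>c'. N c' c' \<and> N c' c \<and> x = 2 * rep c'))"

lemma model_rep_iff:
  assumes "N c c"
  shows "model d (2 * rep c) \<longleftrightarrow> N c d"
proof (cases "N d d")
  case True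
  then show ?thesis using assms rep_eq_iff unfolding model_def by simp
next
  case False
  have "(\<exists>c'. N c' c' \<and> N c' d \<and> rep c = rep c') \<longleftrightarrow> N c d"
    using assms rep_eq_iff trans by metis
  with False show ?thesis unfolding model_def by auto
qed

lemma feval_T_Eps_model: "feval UNIV model e (T (Eps c d)) \<longleftrightarrow> N c d"
proof (cases "N c c")
  case True
  then have "model c x \<longleftrightarrow> x = 2 * rep c" for x
    unfolding model_def by simp
  with model_rep_iff[OF True] show ?thesis by auto
next
  case False
  then have "model c 1" "model c 3"
    unfolding model_def by simp_all
  then have "\<not> feval UNIV model e (T (Eps c d))" by force
  with False show ?thesis using refl_left by blast
qed

end

lemma hintikka_eps_closed: "hintikka A \<Longrightarrow> eps_closed (\<lambda>c d. neg_part (Eps c d) A)"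
  unfolding hintikka_def by unfold_locales blast+

lemma hintikka_Or_Eps_not_fol_valid:
  assumes "hintikka A" "lit_disj A" "\<not> fol_valid (T A)" "\<not> neg_part (Eps a b) A"
  shows "\<not> fol_valid (T (Or A (Eps a b)))"
proof -
  interpret eps_closed "\<lambda>c d. neg_part (Eps c d) A"
    using assms(1) by (rule hintikka_eps_closed)
  let ?e = "\<lambda>_. 0 :: nat"
  have atom: "feval UNIV model ?e (T (Eps c d)) \<longleftrightarrow> (c, d) \<in> neglits A" for c d
    using feval_T_Eps_model neg_part_Eps_lit_disj_iff[OF assms(2)] by blast
  have "poslits A \<inter> neglits A = {}"
    using lit_disj_complementary_fol_valid assms(2,3) by fast
  then have "\<not> feval UNIV model ?e (T A)"
    using feval_T_lit_disj[OF assms(2)] atom by blast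
  moreover have "\<not> feval UNIV model ?e (T (Eps a b))"
    using feval_T_Eps_model assms(4) by blast
  ultimately have "\<not> feval UNIV model ?e (T (Or A (Eps a b)))"
    by (simp del: T.simps(1))
  then show ?thesis unfolding fol_valid_def by blast
qed

lemma refut_not_fol_valid: "refut a0 A \<Longrightarrow> \<not> fol_valid (T A)"
proof (induction rule: refut.induct)
  case r1
  show ?case unfolding fol_valid_def
    by (auto intro!: exI[of _ UNIV] exI[of _ "\<lambda>_ _. False"] exI[of _ "\<lambda>_. 0"])
next
  case r2
  show ?case unfolding fol_valid_def
    by (auto intro!: exI[of _ UNIV] exI[of _ "\<lambda>_ x. x = (0::nat)"] exI[of _ "\<lambda>_. 0"])
next
  case (r3 A B)
  then show ?case using hprov_fol_valid fol_valid_T_Imp by blast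
next
  case (r4 A s B)
  then show ?case unfolding fol_valid_def by (auto simp: feval_T_nsubst)
next
  case (r5 A a b)
  then show ?case using hintikka_Or_Eps_not_fol_valid by blast
qed

theorem theorem6p1:
  fixes a0 :: nat and A :: form
  assumes "fol_valid (T A)"
  shows "\<not> refut a0 A"
  using refut_not_fol_valid assms by blast

end
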